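(* For a positive integer $c$ let $m_c=\frac{(2c)!}{2^c\,c!}\cdot 2c$, and for a positive integer $n$ let $C_n=\frac{1}{n+1}\binom{2n}{n}$ be the $n$th Catalan number. Then for all sufficiently large $n$ and every positive integer $c$ with $c+2\le \frac{\ln n}{4\ln\ln n}$, one has $m_c^{2n}\,C_n^{\,c} < (2n-1)!! = \frac{(2n)!}{n!\,2^n}$.
   Context: Here $\ln$ denotes the natural logarithm and $(2n-1)!!=1\cdot 3\cdot 5\cdots(2n-1)$. *)

theory Defs
  imports "HOL-Analysis.Analysis"
begin

definition m_const :: "nat \<Rightarrow> real" where
  "m_const c = fact (2*c) / (2^c * fact c) * (2 * real c)"

definition catalan :: "nat \<Rightarrow> real" where
  "catalan n = real (2*n choose n) / (real n + 1)"

definition odd_double_fact :: "nat \<Rightarrow> real" where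
  "odd_double_fact n = (\<Prod>i=1..n. real (2*i - 1))"

end

theory Submission
  imports Defs
begin

(* Every factor is bounded crudely:
     m_c <= (2c)^(c+1),   C_n <= 4^n,   (n/e)^n <= n! <= (2n-1)!!.
   Hence m_c^(2n) C_n^c <= B_c^n with B_c = (2c)^(2(c+1)) 4^c, and it suffices
   to show B_c < n/e.  Writing L = ln n and l = ln L, the hypothesis
   (c+2) * 4l <= L forces 2c <= L, so ln (2c) <= l, and then
     ln B_c <= 2(c+1) l + c ln 4 < (c+2) 4l - 1 <= L - 1   (once l >= 2). *)

text \<open>The central factorial ratio: \<open>m_c\<close> is at most \<open>(2c)^(c+1)\<close>, since
  \<open>(2c)!/c!\<close> is a product of \<open>c\<close> factors each at most \<open>2c\<close>.\<close>
lemma m_const_le: "m_const c \<le> (2 * real c) ^ (c + 1)"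
proof -
  have ratio_le: "(fact (2*c) :: nat) div fact c \<le> (2*c) ^ c"
    using fact_div_fact_le_pow[of c "2*c"] by simp
  have "fact c dvd (fact (2*c) :: nat)" by (rule fact_dvd) simp
  hence "(fact (2*c) :: nat) = (fact (2*c) div fact c) * fact c" by simp
  also have "\<dots> \<le> (2*c) ^ c * fact c" using ratio_le by simp
  finally have "real (fact (2*c)) \<le> real ((2*c) ^ c * fact c)" by (rule of_nat_mono)
  hence fact_le: "(fact (2*c) :: real) \<le> (2 * real c) ^ c * fact c" by simp
  have "fact (2*c) / (2^c * fact c) \<le> (fact (2*c) / fact c :: real)"
    by (rule divide_left_mono) auto
  also have "\<dots> \<le> (2 * real c) ^ c"
    using fact_le by (simp add: divide_le_eq)
  finally have "fact (2*c) / (2^c * fact c) * (2 * real c) \<le> (2 * real c) ^ c * (2 * real c)"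
    by (rule mult_right_mono) simp
  then show ?thesis
    unfolding m_const_def by (simp only: power_add power_one_right)
qed

lemma catalan_le_four_pow: "catalan n \<le> 4 ^ n"
proof -
  have "real (2*n choose n) \<le> 2 ^ (2*n)"
    by (metis binomial_le_pow2 of_nat_le_iff of_nat_numeral of_nat_power)
  also have "(2::real) ^ (2*n) = 4 ^ n" by (simp add: power_mult)
  finally have "real (2*n choose n) \<le> 4 ^ n" .
  moreover have "real (2*n choose n) / (real n + 1) \<le> real (2*n choose n)"
    by (simp add: divide_le_eq algebra_simps)
  ultimately show ?thesis unfolding catalan_def by linarith
qed

text \<open>Factorwise comparison \<open>i \<le> 2i - 1\<close> gives \<open>n! \<le> (2n-1)!!\<close>.\<close>
lemma fact_le_odd_double_fact: "fact n \<le> odd_double_fact n"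
proof -
  have "(fact n :: real) = (\<Prod>i=1..n. real i)" by (simp add: fact_prod)
  also have "\<dots> \<le> (\<Prod>i=1..n. real (2*i - 1))" by (rule prod_mono) auto
  finally show ?thesis by (simp add: odd_double_fact_def)
qed

text \<open>The elementary Stirling-type lower bound \<open>(n/e)^n \<le> n!\<close>, from the single
  term \<open>n^n/n!\<close> of the exponential series for \<open>e^n\<close>.\<close>
lemma pow_div_exp_le_fact: "(real n / exp 1) ^ n \<le> fact n"
proof -
  have "real n ^ n / fact n \<le> exp (real n)"
    using summable_exp_generic[of "real n"] sum_le_suminf[of "\<lambda>k. real n ^ k / fact k" "{n}"]
    by (auto simp: exp_def divide_inverse ac_simps)
  moreover have "exp (real n) = exp 1 ^ n" by (simp add: exp_of_nat_mult[symmetric])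
  ultimately show ?thesis by (simp add: power_divide divide_le_eq mult.commute)
qed

lemma ln_base_less:
  fixes L :: real
  assumes "c \<ge> 1" and "exp 2 \<le> L" and small: "(real c + 2) * (4 * ln L) \<le> L"
  shows "ln ((2 * real c) ^ (2 * (c + 1)) * 4 ^ c) < L - 1"
proof -
  have "L > 0" using assms(2) exp_gt_zero[of 2] by linarith
  hence l_ge_2: "ln L \<ge> 2" using assms(2) by (simp add: ln_ge_iff)
  have "(real c + 2) * (4 * 2) \<le> (real c + 2) * (4 * ln L)"
    using l_ge_2 by (intro mult_left_mono) auto
  hence "2 * real c \<le> L" using small by (simp add: algebra_simps)
  hence ln_2c: "ln (2 * real c) \<le> ln L" using \<open>c \<ge> 1\<close> by simp
  have "ln (4::real) = 2 * ln 2" using ln_realpow[of 2 2] by simp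
  hence ln_4: "ln (4::real) \<le> ln L" using ln_2_less_1 l_ge_2 by linarith
  have "ln ((2 * real c) ^ (2 * (c + 1)) * 4 ^ c)
        = real (2 * (c + 1)) * ln (2 * real c) + real c * ln 4"
    using \<open>c \<ge> 1\<close> by (simp only: ln_mult_pos ln_realpow zero_less_power)
  also have "\<dots> \<le> real (2 * (c + 1)) * ln L + real c * ln L"
    using ln_2c ln_4 by (intro add_mono mult_left_mono) auto
  also have "\<dots> < (real c + 2) * (4 * ln L) - 1"
  proof -
    have lhs: "real (2 * (c + 1)) * ln L + real c * ln L = 3 * (real c * ln L) + 2 * ln L"
      by (simp add: algebra_simps)
    have rhs: "(real c + 2) * (4 * ln L) = 4 * (real c * ln L) + 8 * ln L"
      by (simp add: algebra_simps)
    have "0 \<le> real c * ln L" using l_ge_2 by simp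
    with l_ge_2 show ?thesis unfolding lhs rhs by linarith
  qed
  finally show ?thesis using small by linarith
qed

lemma product_le_base_pow:
  "m_const c ^ (2*n) * catalan n ^ c \<le> ((2 * real c) ^ (2 * (c + 1)) * 4 ^ c) ^ n"
proof -
  have "m_const c ^ (2*n) * catalan n ^ c \<le> ((2 * real c) ^ (c + 1)) ^ (2*n) * (4 ^ n) ^ c"
  proof (intro mult_mono power_mono m_const_le catalan_le_four_pow)
    show "0 \<le> m_const c" by (simp add: m_const_def)
    show "0 \<le> catalan n" by (simp add: catalan_def)
    then show "0 \<le> catalan n ^ c" by simp
  qed simp_all
  also have "\<dots> = (2 * real c) ^ ((c + 1) * (2 * n)) * 4 ^ (n * c)"
    by (simp only: power_mult)
  also have "\<dots> = (2 * real c) ^ ((2 * (c + 1)) * n) * 4 ^ (c * n)"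
    by (simp only: mult_ac)
  also have "\<dots> = ((2 * real c) ^ (2 * (c + 1)) * 4 ^ c) ^ n"
    by (simp only: power_mult power_mult_distrib)
  finally show ?thesis .
qed

lemma base_less_div_exp:
  fixes x :: real
  assumes "c \<ge> 1" and x_large: "exp (exp 2) \<le> x"
    and c_small: "real c + 2 \<le> ln x / (4 * ln (ln x))"
  shows "(2 * real c) ^ (2 * (c + 1)) * 4 ^ c < x / exp 1"
proof -
  have x_pos: "x > 0" using x_large exp_gt_zero[of "exp 2"] by linarith
  have L_large: "exp 2 \<le> ln x" using x_large x_pos by (simp add: ln_ge_iff)
  moreover have "ln x > 0" using L_large exp_gt_zero[of 2] by linarith
  ultimately have "ln (ln x) \<ge> 2" by (simp add: ln_ge_iff)
  hence "0 < 4 * ln (ln x)" by simp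
  hence "(real c + 2) * (4 * ln (ln x)) \<le> ln x"
    using c_small by (simp only: pos_le_divide_eq)
  hence "ln ((2 * real c) ^ (2 * (c + 1)) * 4 ^ c) < ln x - 1"
    by (rule ln_base_less[OF \<open>c \<ge> 1\<close> L_large])
  also have "\<dots> = ln (x / exp 1)" using x_pos by (simp add: ln_div)
  finally show ?thesis
    using x_pos \<open>c \<ge> 1\<close> by (simp add: ln_less_cancel_iff)
qed

lemma inequality_for_large_n:
  assumes "c \<ge> 1" and n_large: "exp (exp 2) \<le> real n"
    and c_small: "real c + 2 \<le> ln (real n) / (4 * ln (ln (real n)))"
  shows "m_const c ^ (2*n) * catalan n ^ c < odd_double_fact n"
proof -
  define B where "B = (2 * real c) ^ (2 * (c + 1)) * (4::real) ^ c"
  have "m_const c ^ (2*n) * catalan n ^ c \<le> B ^ n"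
    unfolding B_def by (rule product_le_base_pow)
  also have "\<dots> < (real n / exp 1) ^ n"
  proof (rule power_strict_mono)
    show "B < real n / exp 1"
      unfolding B_def using assms by (rule base_less_div_exp)
    show "0 \<le> B" by (simp add: B_def)
    have "real n > 0" using n_large exp_gt_zero[of "exp 2"] by linarith
    then show "0 < n" by simp
  qed
  also have "\<dots> \<le> odd_double_fact n"
    using pow_div_exp_le_fact fact_le_odd_double_fact by (rule order_trans)
  finally show ?thesis .
qed

theorem mainTheorem3:
  shows "\<forall>\<^sub>F n in at_top. \<forall>c::nat. c \<ge> 1 \<and>
            real c + 2 \<le> ln (real n) / (4 * ln (ln (real n))) \<longrightarrow>
            m_const c ^ (2*n) * catalan n ^ c < odd_double_fact n"
proof -
  have "\<forall>\<^sub>F n in at_top. exp (exp 2) \<le> real n"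
    using filterlim_real_sequentially unfolding filterlim_at_top by blast
  then show ?thesis
    by (elim eventually_mono) (use inequality_for_large_n in blast)
qed

end
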